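(* For every $\epsilon>0$ there is a randomized distributed algorithm in the CONGEST model which, on any directed graph with positive edge weights, outputs a directed cut whose expected weight is at least $(1/2-\epsilon)$ times the maximum directed cut weight, and runs in $O(\epsilon^{-1})$ communication rounds.
   Context: Weighted Max-DiCut: partition $V$ into $A,B$ (each vertex outputs its side) to maximize the total weight of edges directed from $A$ to $B$. CONGEST: the network is the underlying graph, synchronous rounds, $O(\log n)$-bit messages per edge per round. *)

theory Defs
  imports "HOL-Probability.Probability"
begin

text \<open>A weighted digraph on the finite vertex set V (vertex IDs are naturals).
  w u v > 0 means there is a directed edge u to v of (positive) weight w u v;
  w u v = 0 means there is no such edge.\<close>

definition wdigraph :: "nat set \<Rightarrow> (nat \<Rightarrow> nat \<Rightarrow> real) \<Rightarrow> bool" where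
  "wdigraph V w \<longleftrightarrow> finite V \<and> (\<forall>u v. 0 \<le> w u v) \<and>
     (\<forall>u v. w u v \<noteq> 0 \<longrightarrow> u \<in> V \<and> v \<in> V \<and> u \<noteq> v)"

definition dicut_weight :: "nat set \<Rightarrow> (nat \<Rightarrow> nat \<Rightarrow> real) \<Rightarrow> nat set \<Rightarrow> real" where
  "dicut_weight V w A = (\<Sum>u\<in>A. \<Sum>v\<in>V - A. w u v)"

definition max_dicut :: "nat set \<Rightarrow> (nat \<Rightarrow> nat \<Rightarrow> real) \<Rightarrow> real" where
  "max_dicut V w = Max (dicut_weight V w ` Pow V)"

text \<open>Neighbours in the underlying undirected graph (= communication network).\<close>
definition nbrs :: "nat set \<Rightarrow> (nat \<Rightarrow> nat \<Rightarrow> real) \<Rightarrow> nat \<Rightarrow> nat set" where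
  "nbrs V w v = {u \<in> V. 0 < w v u \<or> 0 < w u v}"

text \<open>Local input of a node: its ID, the number n of nodes, the weights of its
  outgoing edges, the weights of its incoming edges, and its private random bits.\<close>
type_synonym local_input = "nat \<times> nat \<times> (nat \<Rightarrow> real) \<times> (nat \<Rightarrow> real) \<times> bool list"

text \<open>A view: the local input together with the list of the messages received in
  each round so far (as a function from sender ID to message; [] for non-neighbours).\<close>
type_synonym view = "local_input \<times> (nat \<Rightarrow> bool list) list"

record congest_alg =
  rounds :: nat
  rand_bits :: "nat \<Rightarrow> nat"             \<comment> \<open>number of random bits per node, given n\<close>
  send :: "view \<Rightarrow> nat \<Rightarrow> bool list"    \<comment> \<open>message sent to the neighbour with given ID\<close>
  decide :: "view \<Rightarrow> bool"               \<comment> \<open>final output: True = side A, False = side B\<close>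

definition local_input :: "nat set \<Rightarrow> (nat \<Rightarrow> nat \<Rightarrow> real) \<Rightarrow> (nat \<Rightarrow> bool list) \<Rightarrow> nat \<Rightarrow> local_input" where
  "local_input V w r v = (v, card V, (\<lambda>u. w v u), (\<lambda>u. w u v), r v)"

primrec history :: "congest_alg \<Rightarrow> nat set \<Rightarrow> (nat \<Rightarrow> nat \<Rightarrow> real) \<Rightarrow> (nat \<Rightarrow> bool list)
    \<Rightarrow> nat \<Rightarrow> nat \<Rightarrow> (nat \<Rightarrow> bool list) list" where
  "history A V w r 0 = (\<lambda>v. [])"
| "history A V w r (Suc t) = (\<lambda>v. history A V w r t v @
     [(\<lambda>u. if u \<in> nbrs V w v then send A (local_input V w r u, history A V w r t u) v else [])])"

definition node_view :: "congest_alg \<Rightarrow> nat set \<Rightarrow> (nat \<Rightarrow> nat \<Rightarrow> real) \<Rightarrow> (nat \<Rightarrow> bool list)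
    \<Rightarrow> nat \<Rightarrow> nat \<Rightarrow> view" where
  "node_view A V w r t v = (local_input V w r v, history A V w r t v)"

definition output_cut :: "congest_alg \<Rightarrow> nat set \<Rightarrow> (nat \<Rightarrow> nat \<Rightarrow> real) \<Rightarrow> (nat \<Rightarrow> bool list) \<Rightarrow> nat set" where
  "output_cut A V w r = {v \<in> V. decide A (node_view A V w r (rounds A) v)}"

definition random_bits_pmf :: "congest_alg \<Rightarrow> nat set \<Rightarrow> (nat \<Rightarrow> bool list) pmf" where
  "random_bits_pmf A V = Pi_pmf V [] (\<lambda>_. pmf_of_set {xs. length xs = rand_bits A (card V)})"

definition admissible :: "nat \<Rightarrow> nat set \<Rightarrow> (nat \<Rightarrow> nat \<Rightarrow> real) \<Rightarrow> bool" where
  "admissible k V w \<longleftrightarrow> wdigraph V w \<and> V \<subseteq> {..< card V ^ k}"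

definition msg_bound :: "nat \<Rightarrow> nat \<Rightarrow> nat" where
  "msg_bound c n = c * (nat \<lceil>log 2 (real n)\<rceil> + 1)"

definition respects_bandwidth :: "nat \<Rightarrow> congest_alg \<Rightarrow> nat \<Rightarrow> bool" where
  "respects_bandwidth k A c \<longleftrightarrow>
     (\<forall>V w r t v u. admissible k V w \<longrightarrow> (\<forall>x\<in>V. length (r x) = rand_bits A (card V)) \<longrightarrow>
        t < rounds A \<longrightarrow> v \<in> V \<longrightarrow> u \<in> nbrs V w v \<longrightarrow>
        length (send A (node_view A V w r t v) u) \<le> msg_bound c (card V))"

end

theory Submission
  imports Defs
begin

text \<open>The algorithm is a distributed, discretised continuous double greedy on the multilinear
  extension F of the cut weight. Every node v keeps a position x(v), starting at 0, and implicitly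
  y(v) = x(v) + 1 - t/T. In each of T rounds it compares the gain a of raising x(v) with the gain b
  of lowering y(v) (both are local quantities), raises x(v) by p/T and lowers y(v) by (1 - p)/T,
  where p \<approx> a/(a + b). The potential F(z) + (F(x) + F(y))/2, with z equal to y on an optimal
  side A and to x elsewhere, then decreases by O(W/T) per round, where W is the total weight;
  since x = y = z after T rounds, 2 F(x) \<ge> OPT - O(W/T), and W \<le> 4 OPT because a uniformly
  random cut has expected weight W/4. Quantising p to multiples of 1/M lets the increments be
  sent as O(1)-bit messages at an additional O(W/M) cost. Finally every node joins A
  independently with probability x(v), so the expected cut weight is exactly F(x).\<close>

section \<open>Uniformly random bit strings\<close>

lemma card_bool_lists_horner_sum_less:
  assumes "j \<le> 2 ^ m"
  shows "card {bs. length bs = m \<and> horner_sum of_bool 2 bs < (j::nat)} = j"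
proof -
  have bits_inverse: "horner_sum of_bool 2 (map (bit k) [0..<m]) = k" if "k < 2 ^ m" for k :: nat
    using that by (simp add: horner_sum_bit_eq_take_bit take_bit_nat_eq_self_iff)
  have "bij_betw (horner_sum of_bool 2) {bs. length bs = m \<and> horner_sum of_bool 2 bs < j} {..<j}"
    by (rule bij_betw_byWitness[where f' = "\<lambda>k. map (bit k) [0..<m]"])
      (use assms bits_inverse in \<open>auto simp: bit_horner_sum_bit_iff intro: nth_equalityI\<close>)
  then show ?thesis by (simp add: bij_betw_same_card)
qed

lemma measure_horner_sum_less:
  assumes "j \<le> 2 ^ m"
  shows "measure (pmf_of_set {bs. length bs = m}) {bs. horner_sum of_bool 2 bs < (j::nat)} = real j / 2 ^ m"
proof -
  have "replicate m False \<in> {bs. length bs = m}" by simp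
  then have "{bs::bool list. length bs = m} \<noteq> {}" by blast
  moreover have "{bs. length bs = m} \<inter> {bs. horner_sum of_bool 2 bs < j} =
      {bs. length bs = m \<and> horner_sum of_bool 2 bs < j}" by auto
  ultimately show ?thesis
    using card_bool_lists_horner_sum_less[OF assms] card_lists_length_eq[of "UNIV::bool set" m]
      finite_lists_length_eq[of "UNIV::bool set" m]
    by (simp add: measure_pmf_of_set)
qed

section \<open>The multilinear extension of the cut weight\<close>

definition multilinear_dicut :: "nat set \<Rightarrow> (nat \<Rightarrow> nat \<Rightarrow> real) \<Rightarrow> (nat \<Rightarrow> real) \<Rightarrow> real" where
  "multilinear_dicut V w X = (\<Sum>u\<in>V. \<Sum>v\<in>V. w u v * X u * (1 - X v))"

lemma multilinear_dicut_indicator: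
  assumes "finite V" "S \<subseteq> V"
  shows "multilinear_dicut V w (\<lambda>u. of_bool (u \<in> S)) = dicut_weight V w S"
proof -
  have "multilinear_dicut V w (\<lambda>u. of_bool (u \<in> S)) =
      (\<Sum>u\<in>V. if u \<in> S then \<Sum>v\<in>V. if v \<in> S then 0 else w u v else 0)"
    unfolding multilinear_dicut_def by (intro sum.cong) (auto intro: sum.cong)
  also have "\<dots> = dicut_weight V w S"
    using assms by (simp add: sum.If_cases Int_absorb1 Diff_eq dicut_weight_def)
  finally show ?thesis .
qed

lemma integrable_measure_pmf_bounded:
  fixes f :: "'a \<Rightarrow> real"
  assumes "\<And>x. \<bar>f x\<bar> \<le> B"
  shows "integrable (measure_pmf p) f"
  by (rule measure_pmf.integrable_const_bound[where B=B]) (use assms in auto)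

lemma expectation_Pi_pmf_pair:
  fixes f g :: "'b \<Rightarrow> real"
  assumes fin: "finite V" and uv: "u \<in> V" "v \<in> V" "u \<noteq> v"
    and bounded: "\<And>x. 0 \<le> f x \<and> f x \<le> B" "\<And>x. 0 \<le> g x \<and> g x \<le> B"
  shows "measure_pmf.expectation (Pi_pmf V d P) (\<lambda>r. f (r u) * g (r v)) =
         measure_pmf.expectation (P u) f * measure_pmf.expectation (P v) g"
proof -
  define h where "h x = (if x = u then f else if x = v then g else (\<lambda>_. 1))" for x
  have h_outside: "\<forall>x\<in>V - {u, v}. h x = (\<lambda>_. 1)" by (simp add: h_def)
  have "(\<Prod>x\<in>V. h x (r x)) = f (r u) * g (r v)" for r
  proof -
    have "(\<Prod>x\<in>V. h x (r x)) = (\<Prod>x\<in>{u, v}. h x (r x))"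
      by (rule prod.mono_neutral_right) (use fin uv h_outside in auto)
    then show ?thesis using uv by (simp add: h_def)
  qed
  moreover have "measure_pmf.expectation (Pi_pmf V d P) (\<lambda>r. \<Prod>x\<in>V. h x (r x)) =
      (\<Prod>x\<in>V. measure_pmf.expectation (P x) (h x))"
    by (rule expectation_prod_Pi_pmf)
      (use fin bounded in \<open>auto simp: h_def le_max_iff_disj intro!: integrable_measure_pmf_bounded[where B="max B 1"]\<close>)
  moreover have "(\<Prod>x\<in>V. measure_pmf.expectation (P x) (h x)) =
      (\<Prod>x\<in>{u, v}. measure_pmf.expectation (P x) (h x))"
    by (rule prod.mono_neutral_right) (use fin uv h_outside in auto)
  ultimately show ?thesis using uv by (simp add: h_def)
qed

lemma expectation_dicut_Pi_pmf:
  assumes fin: "finite V" and loopless: "\<And>u. w u u = 0"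
  shows "measure_pmf.expectation (Pi_pmf V d P) (\<lambda>r. dicut_weight V w {v\<in>V. Q v (r v)})
     = multilinear_dicut V w (\<lambda>v. measure (P v) {x. Q v x})"
proof -
  define e where "e u v = (\<lambda>r. w u v * (of_bool (Q u (r u)) * of_bool (\<not> Q v (r v))))" for u v
  have integrable: "integrable (measure_pmf (Pi_pmf V d P)) (e u v)" for u v
    by (rule integrable_measure_pmf_bounded[where B="\<bar>w u v\<bar>"]) (simp add: e_def abs_mult)
  have measure_eq: "measure (P u) {x. R x} = measure_pmf.expectation (P u) (\<lambda>x. of_bool (R x))"
    for u R
  proof -
    have "(\<lambda>x. of_bool (R x) :: real) = indicator {x. R x}" by (auto simp: indicator_def)
    then show ?thesis by simp
  qed
  have measure_compl: "measure (P v) {x. \<not> Q v x} = 1 - measure (P v) {x. Q v x}" for v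
    using measure_pmf.prob_compl[of "{x. Q v x}" "P v"] by (simp add: Compl_eq_Diff_UNIV[symmetric] Collect_neg_eq)
  have "dicut_weight V w {v\<in>V. Q v (r v)} = (\<Sum>u\<in>V. \<Sum>v\<in>V. e u v r)" for r
  proof -
    have "dicut_weight V w {v\<in>V. Q v (r v)} = multilinear_dicut V w (\<lambda>u. of_bool (u \<in> {v\<in>V. Q v (r v)}))"
      by (rule multilinear_dicut_indicator[symmetric]) (use fin in auto)
    then show ?thesis unfolding multilinear_dicut_def e_def by (auto intro!: sum.cong)
  qed
  then have "measure_pmf.expectation (Pi_pmf V d P) (\<lambda>r. dicut_weight V w {v\<in>V. Q v (r v)}) =
      (\<Sum>u\<in>V. \<Sum>v\<in>V. measure_pmf.expectation (Pi_pmf V d P) (e u v))"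
    using integrable by (simp add: Bochner_Integration.integral_sum)
  also have "\<dots> = multilinear_dicut V w (\<lambda>v. measure (P v) {x. Q v x})"
    unfolding multilinear_dicut_def
  proof (intro sum.cong refl)
    fix u v assume uv: "u \<in> V" "v \<in> V"
    show "measure_pmf.expectation (Pi_pmf V d P) (e u v) =
        w u v * measure (P u) {x. Q u x} * (1 - measure (P v) {x. Q v x})"
    proof (cases "u = v")
      case False
      have "measure_pmf.expectation (Pi_pmf V d P) (\<lambda>r. of_bool (Q u (r u)) * of_bool (\<not> Q v (r v))) =
          measure (P u) {x. Q u x} * measure (P v) {x. \<not> Q v x}"
        by (subst expectation_Pi_pmf_pair[OF fin uv False, where B=1]) (auto simp: measure_eq)
      then show ?thesis by (simp add: e_def measure_compl mult.assoc)
    qed (simp add: e_def loopless)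
  qed
  finally show ?thesis .
qed

definition total_weight :: "nat set \<Rightarrow> (nat \<Rightarrow> nat \<Rightarrow> real) \<Rightarrow> real" where
  "total_weight V w = (\<Sum>u\<in>V. \<Sum>v\<in>V. w u v)"

lemma abs_dicut_weight_le:
  assumes "finite V" "S \<subseteq> V"
  shows "\<bar>dicut_weight V w S\<bar> \<le> (\<Sum>u\<in>V. \<Sum>v\<in>V. \<bar>w u v\<bar>)"
proof -
  have "\<bar>dicut_weight V w S\<bar> \<le> (\<Sum>u\<in>S. \<Sum>v\<in>V - S. \<bar>w u v\<bar>)"
    unfolding dicut_weight_def by (rule order_trans[OF sum_abs sum_mono[OF sum_abs]])
  also have "\<dots> \<le> (\<Sum>u\<in>S. \<Sum>v\<in>V. \<bar>w u v\<bar>)"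
    using assms by (intro sum_mono sum_mono2) auto
  also have "\<dots> \<le> (\<Sum>u\<in>V. \<Sum>v\<in>V. \<bar>w u v\<bar>)"
    using assms by (intro sum_mono2 sum_nonneg) auto
  finally show ?thesis .
qed

lemma dicut_weight_le_max_dicut:
  assumes "finite V" "S \<subseteq> V"
  shows "dicut_weight V w S \<le> max_dicut V w"
  unfolding max_dicut_def using assms by (intro Max_ge) auto

lemma max_dicut_attained:
  assumes "finite V"
  obtains S where "S \<subseteq> V" "dicut_weight V w S = max_dicut V w"
proof -
  have "max_dicut V w \<in> dicut_weight V w ` Pow V"
    unfolding max_dicut_def using assms by (intro Max_in) auto
  then show ?thesis using that by auto
qed

lemma max_dicut_nonneg:
  assumes "finite V"
  shows "0 \<le> max_dicut V w"
  using dicut_weight_le_max_dicut[OF assms, of "{}" w] by (simp add: dicut_weight_def)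

lemma total_weight_le_max_dicut:
  assumes fin: "finite V" and loopless: "\<And>u. w u u = 0"
  shows "total_weight V w \<le> 4 * max_dicut V w"
proof -
  let ?p = "Pi_pmf V False (\<lambda>_. bernoulli_pmf (1/2))"
  have "{x. x} = {True}" by auto
  then have half: "measure (bernoulli_pmf (1/2)) {x. x} = 1/2"
    by (simp add: measure_pmf_single)
  have "measure_pmf.expectation ?p (\<lambda>r. dicut_weight V w {v\<in>V. r v}) =
      multilinear_dicut V w (\<lambda>_. 1/2)"
    using expectation_dicut_Pi_pmf[where w=w, OF fin loopless, where d=False and P="\<lambda>_. bernoulli_pmf (1/2)" and Q="\<lambda>_ x. x"]
    by (simp add: half)
  also have "\<dots> = total_weight V w / 4"
    by (simp add: multilinear_dicut_def total_weight_def sum_divide_distrib)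
  finally have "total_weight V w / 4 = measure_pmf.expectation ?p (\<lambda>r. dicut_weight V w {v\<in>V. r v})" ..
  also have "\<dots> \<le> max_dicut V w"
  proof (rule measure_pmf.integral_le_const)
    show "integrable (measure_pmf ?p) (\<lambda>r. dicut_weight V w {v\<in>V. r v})"
      by (rule integrable_measure_pmf_bounded[OF abs_dicut_weight_le[OF fin]]) auto
    show "AE r in measure_pmf ?p. dicut_weight V w {v\<in>V. r v} \<le> max_dicut V w"
      by (rule AE_pmfI) (rule dicut_weight_le_max_dicut[OF fin], auto)
  qed
  finally show ?thesis by simp
qed

definition multilinear_dicut_deriv :: "nat set \<Rightarrow> (nat \<Rightarrow> nat \<Rightarrow> real) \<Rightarrow> (nat \<Rightarrow> real) \<Rightarrow> nat \<Rightarrow> real" where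
  "multilinear_dicut_deriv V w X v = (\<Sum>u\<in>V. w v u * (1 - X u) - w u v * X u)"

definition edge_quadratic_form :: "nat set \<Rightarrow> (nat \<Rightarrow> nat \<Rightarrow> real) \<Rightarrow> (nat \<Rightarrow> real) \<Rightarrow> real" where
  "edge_quadratic_form V w D = (\<Sum>u\<in>V. \<Sum>v\<in>V. w u v * D u * D v)"

lemma multilinear_dicut_add:
  "multilinear_dicut V w (\<lambda>u. X u + D u) =
     multilinear_dicut V w X + (\<Sum>v\<in>V. D v * multilinear_dicut_deriv V w X v) - edge_quadratic_form V w D"
proof -
  have "(\<Sum>v\<in>V. D v * multilinear_dicut_deriv V w X v) =
      (\<Sum>v\<in>V. \<Sum>u\<in>V. D v * w v u * (1 - X u)) - (\<Sum>v\<in>V. \<Sum>u\<in>V. D v * w u v * X u)"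
    unfolding multilinear_dicut_deriv_def
    by (simp add: sum_distrib_left right_diff_distrib sum_subtractf mult.assoc)
  also have "(\<Sum>v\<in>V. \<Sum>u\<in>V. D v * w u v * X u) = (\<Sum>u\<in>V. \<Sum>v\<in>V. D v * w u v * X u)"
    by (rule sum.swap)
  finally have linear_part: "(\<Sum>v\<in>V. D v * multilinear_dicut_deriv V w X v) =
      (\<Sum>u\<in>V. \<Sum>v\<in>V. D u * w u v * (1 - X v)) - (\<Sum>u\<in>V. \<Sum>v\<in>V. D v * w u v * X u)" .
  have "multilinear_dicut V w (\<lambda>u. X u + D u) =
      (\<Sum>u\<in>V. \<Sum>v\<in>V. (w u v * X u * (1 - X v) + D u * w u v * (1 - X v)) - (D v * w u v * X u + w u v * D u * D v))"
    unfolding multilinear_dicut_def by (intro sum.cong refl) (simp add: algebra_simps)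
  then show ?thesis
    unfolding linear_part multilinear_dicut_def edge_quadratic_form_def by (simp add: sum.distrib sum_subtractf)
qed

lemma abs_edge_quadratic_form_le:
  assumes nonneg: "\<And>u v. 0 \<le> w u v" and bounded: "\<And>u. u \<in> V \<Longrightarrow> \<bar>D u\<bar> \<le> c"
  shows "\<bar>edge_quadratic_form V w D\<bar> \<le> c * c * total_weight V w"
proof -
  have "\<bar>edge_quadratic_form V w D\<bar> \<le> (\<Sum>u\<in>V. \<Sum>v\<in>V. \<bar>w u v * D u * D v\<bar>)"
    unfolding edge_quadratic_form_def by (rule order_trans[OF sum_abs sum_mono[OF sum_abs]])
  also have "\<dots> \<le> (\<Sum>u\<in>V. \<Sum>v\<in>V. c * c * w u v)"
  proof (intro sum_mono)
    fix u v assume "u \<in> V" "v \<in> V"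
    then have "\<bar>D u\<bar> * \<bar>D v\<bar> \<le> c * c"
      using bounded by (intro mult_mono) (auto intro: order_trans[OF abs_ge_zero])
    then have "w u v * (\<bar>D u\<bar> * \<bar>D v\<bar>) \<le> w u v * (c * c)"
      using nonneg by (rule mult_left_mono)
    then show "\<bar>w u v * D u * D v\<bar> \<le> c * c * w u v"
      using nonneg[of u v] by (simp add: abs_mult mult_ac)
  qed
  also have "\<dots> = c * c * total_weight V w"
    unfolding total_weight_def by (simp add: sum_distrib_left)
  finally show ?thesis .
qed

lemma multilinear_dicut_add_ge:
  assumes "\<And>u v. 0 \<le> w u v" and "\<And>u. u \<in> V \<Longrightarrow> \<bar>D u\<bar> \<le> c"
  shows "multilinear_dicut V w X + (\<Sum>v\<in>V. D v * multilinear_dicut_deriv V w X v) - c * c * total_weight V w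
      \<le> multilinear_dicut V w (\<lambda>u. X u + D u)"
proof -
  have "edge_quadratic_form V w D \<le> c * c * total_weight V w"
    using abs_edge_quadratic_form_le[where w=w and V=V and D=D and c=c] assms by simp
  then show ?thesis by (simp add: multilinear_dicut_add)
qed

lemma multilinear_dicut_deriv_antimono:
  assumes nonneg: "\<And>u v. 0 \<le> w u v" and le: "\<And>u. u \<in> V \<Longrightarrow> X u \<le> Z u"
  shows "multilinear_dicut_deriv V w Z v \<le> multilinear_dicut_deriv V w X v"
  unfolding multilinear_dicut_deriv_def
proof (rule sum_mono)
  fix u assume "u \<in> V"
  then have "w v u * (1 - Z u) \<le> w v u * (1 - X u)" "w u v * X u \<le> w u v * Z u"
    using le nonneg by (auto intro: mult_left_mono)
  then show "w v u * (1 - Z u) - w u v * Z u \<le> w v u * (1 - X u) - w u v * X u" by linarith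
qed

lemma sum_abs_multilinear_dicut_deriv_le:
  assumes nonneg: "\<And>u v. 0 \<le> w u v" and unit: "\<And>u. u \<in> V \<Longrightarrow> 0 \<le> X u \<and> X u \<le> 1"
  shows "(\<Sum>v\<in>V. \<bar>multilinear_dicut_deriv V w X v\<bar>) \<le> 2 * total_weight V w"
proof -
  have "\<bar>multilinear_dicut_deriv V w X v\<bar> \<le> (\<Sum>u\<in>V. w v u + w u v)" for v
    unfolding multilinear_dicut_deriv_def
  proof (rule order_trans[OF sum_abs sum_mono])
    fix u assume "u \<in> V"
    then have "0 \<le> w v u * (1 - X u)" "w v u * (1 - X u) \<le> w v u"
      "0 \<le> w u v * X u" "w u v * X u \<le> w u v"
      using unit nonneg by (auto intro: mult_left_le)
    then show "\<bar>w v u * (1 - X u) - w u v * X u\<bar> \<le> w v u + w u v" by linarith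
  qed
  then have "(\<Sum>v\<in>V. \<bar>multilinear_dicut_deriv V w X v\<bar>) \<le> (\<Sum>v\<in>V. \<Sum>u\<in>V. w v u + w u v)"
    by (rule sum_mono)
  also have "\<dots> = (\<Sum>v\<in>V. \<Sum>u\<in>V. w v u) + (\<Sum>v\<in>V. \<Sum>u\<in>V. w u v)"
    by (simp add: sum.distrib)
  also have "(\<Sum>v\<in>V. \<Sum>u\<in>V. w u v) = (\<Sum>u\<in>V. \<Sum>v\<in>V. w u v)"
    by (rule sum.swap)
  finally show ?thesis by (simp add: total_weight_def)
qed

section \<open>Quantised greedy ratios\<close>

lemma biased_ratio_tradeoff:
  fixes a b \<theta> e :: real
  assumes a: "0 < a" and b: "0 < b" and \<theta>: "0 \<le> \<theta>" "\<theta> * (a + b) \<le> e"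
    and p: "p = a / (a + b) - \<theta>"
  shows "(1 - p) * a \<le> (p * a + (1 - p) * b) / 2 + 2 * e"
    and "p * b \<le> (p * a + (1 - p) * b) / 2 + 2 * e"
proof -
  have s: "0 < a + b" using a b by simp
  \<comment> \<open>at \<theta> = 0 both losses equal a b/(a + b), which is at most half the average gain
    (a^2 + b^2)/(a + b); the bias \<theta> moves each side by at most 3 \<theta> (a + b)\<close>
  have gap_a: "2 * a - b - a / (a + b) * (3 * a - b) = - ((a - b)\<^sup>2 / (a + b))"
    using s by (simp add: field_simps power2_eq_square)
  have gap_b: "a / (a + b) * (3 * b - a) - b = - ((a - b)\<^sup>2 / (a + b))"
    using s by (simp add: field_simps power2_eq_square)
  have half: "X \<le> Y / 2 + 2 * e" if "2 * X - Y \<le> 4 * e" for X Y :: real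
    using that by linarith
  have "0 \<le> (a - b)\<^sup>2 / (a + b)" using s by simp
  moreover have "0 \<le> \<theta> * (a + b)" using s \<theta> by simp
  moreover have "\<theta> * (3 * a - b) \<le> \<theta> * (3 * (a + b))" "\<theta> * (a - 3 * b) \<le> \<theta> * (3 * (a + b))"
    using a b \<theta> by (intro mult_left_mono; simp)+
  moreover have "\<theta> * (3 * (a + b)) = 3 * (\<theta> * (a + b))" by simp
  moreover have "2 * ((1 - p) * a) - (p * a + (1 - p) * b) = (2 * a - b - a / (a + b) * (3 * a - b)) + \<theta> * (3 * a - b)"
    "2 * (p * b) - (p * a + (1 - p) * b) = (a / (a + b) * (3 * b - a) - b) + \<theta> * (a - 3 * b)"
    by (simp_all add: p algebra_simps)
  ultimately show "(1 - p) * a \<le> (p * a + (1 - p) * b) / 2 + 2 * e"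
    and "p * b \<le> (p * a + (1 - p) * b) / 2 + 2 * e"
    using gap_a gap_b \<theta>(2) by (intro half; linarith)+
qed

definition quantized_ratio :: "nat \<Rightarrow> real \<Rightarrow> real \<Rightarrow> nat" where
  "quantized_ratio M a b = (if a \<le> 0 then 0 else if b \<le> 0 then M else nat \<lfloor>M * a / (a + b)\<rfloor>)"

lemma quantized_ratio_le: "quantized_ratio M a b \<le> M"
proof -
  have "nat \<lfloor>M * a / (a + b)\<rfloor> \<le> M" if "0 < a" "0 < b"
  proof -
    have "M * a / (a + b) \<le> M" using that by (simp add: divide_le_eq mult_left_mono)
    then show ?thesis by linarith
  qed
  then show ?thesis unfolding quantized_ratio_def by auto
qed

lemma quantized_ratio_tradeoff:
  fixes a b :: real
  assumes M: "0 < M" and ab: "0 \<le> a + b" and p: "p = quantized_ratio M a b / M"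
  shows "(1 - p) * a \<le> (p * a + (1 - p) * b) / 2 + 2 * ((\<bar>a\<bar> + \<bar>b\<bar>) / M)"
    and "p * b \<le> (p * a + (1 - p) * b) / 2 + 2 * ((\<bar>a\<bar> + \<bar>b\<bar>) / M)"
proof -
  define e where "e = (\<bar>a\<bar> + \<bar>b\<bar>) / M"
  have "0 \<le> e" by (simp add: e_def)
  consider "a \<le> 0" | "0 < a" "b \<le> 0" | "0 < a" "0 < b" by linarith
  then have "(1 - p) * a \<le> (p * a + (1 - p) * b) / 2 + 2 * e \<and> p * b \<le> (p * a + (1 - p) * b) / 2 + 2 * e"
  proof cases
    case 1
    then have "p = 0" using p by (simp add: quantized_ratio_def)
    then show ?thesis using 1 ab \<open>0 \<le> e\<close> by simp
  next
    case 2
    then have "p = 1" using p M by (simp add: quantized_ratio_def)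
    then show ?thesis using 2 ab \<open>0 \<le> e\<close> by simp
  next
    case 3
    define x where "x = M * a / (a + b)"
    have "0 \<le> x" using 3 by (simp add: x_def)
    define \<theta> where "\<theta> = a / (a + b) - p"
    have p_eq: "p = real (nat \<lfloor>x\<rfloor>) / M" using p 3 by (simp add: quantized_ratio_def x_def)
    have "\<theta> * M = x - \<lfloor>x\<rfloor>"
      using M \<open>0 \<le> x\<close> by (simp add: \<theta>_def p_eq x_def left_diff_distrib)
    moreover have "0 \<le> x - \<lfloor>x\<rfloor>" "x - \<lfloor>x\<rfloor> \<le> 1"
      using of_int_floor_le[of x] real_of_int_floor_add_one_gt[of x] by linarith+
    ultimately have "0 \<le> \<theta> * M" "\<theta> * M \<le> 1" by linarith+
    then have "0 \<le> \<theta>" using M by (simp add: zero_le_mult_iff)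
    have "\<theta> * M * (a + b) \<le> 1 * (a + b)"
      using \<open>\<theta> * M \<le> 1\<close> 3 by (intro mult_right_mono) auto
    then have "\<theta> * (a + b) \<le> e"
      using 3 M by (simp add: e_def pos_le_divide_eq mult_ac)
    then show ?thesis using biased_ratio_tradeoff[OF 3 \<open>0 \<le> \<theta>\<close>] by (simp add: \<theta>_def)
  qed
  then show "(1 - p) * a \<le> (p * a + (1 - p) * b) / 2 + 2 * ((\<bar>a\<bar> + \<bar>b\<bar>) / M)"
    and "p * b \<le> (p * a + (1 - p) * b) / 2 + 2 * ((\<bar>a\<bar> + \<bar>b\<bar>) / M)"
    by (simp_all add: e_def)
qed

section \<open>The fractional double greedy process\<close>

lemma sum_quantized_greedy_loss_le:
  fixes x y :: "nat \<Rightarrow> real"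
  assumes nonneg: "\<And>u v. 0 \<le> w u v" and M: "0 < M"
    and xy: "\<And>u. 0 \<le> x u \<and> x u \<le> y u \<and> y u \<le> 1"
    and p: "\<And>u. p u = quantized_ratio M (multilinear_dicut_deriv V w x u) (- multilinear_dicut_deriv V w y u) / M"
  shows "(\<Sum>v\<in>V. if v \<in> S then (1 - p v) * multilinear_dicut_deriv V w x v
                  else p v * - multilinear_dicut_deriv V w y v)
    \<le> ((\<Sum>v\<in>V. p v * multilinear_dicut_deriv V w x v)
        + (\<Sum>v\<in>V. (1 - p v) * - multilinear_dicut_deriv V w y v)) / 2 + 8 * (total_weight V w / M)"
proof -
  define a where "a = (\<lambda>v. multilinear_dicut_deriv V w x v)"
  define b where "b = (\<lambda>v. - multilinear_dicut_deriv V w y v)"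
  have "(if v \<in> S then (1 - p v) * a v else p v * b v)
      \<le> (p v * a v + (1 - p v) * b v) / 2 + 2 * ((\<bar>a v\<bar> + \<bar>b v\<bar>) / M)" for v
  proof -
    have "multilinear_dicut_deriv V w y v \<le> multilinear_dicut_deriv V w x v"
      by (rule multilinear_dicut_deriv_antimono[OF nonneg]) (use xy in auto)
    then have "0 \<le> a v + b v" by (simp add: a_def b_def)
    with quantized_ratio_tradeoff[OF M this] show ?thesis by (simp add: p a_def b_def)
  qed
  then have "(\<Sum>v\<in>V. if v \<in> S then (1 - p v) * a v else p v * b v)
      \<le> (\<Sum>v\<in>V. (p v * a v + (1 - p v) * b v) / 2 + 2 * ((\<bar>a v\<bar> + \<bar>b v\<bar>) / M))"
    by (rule sum_mono)
  also have "\<dots> = ((\<Sum>v\<in>V. p v * a v) + (\<Sum>v\<in>V. (1 - p v) * b v)) / 2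
      + 2 * (((\<Sum>v\<in>V. \<bar>a v\<bar>) + (\<Sum>v\<in>V. \<bar>b v\<bar>)) / M)"
    unfolding sum.distrib[of "\<lambda>v. (p v * a v + (1 - p v) * b v) / 2"]
    by (simp only: sum.distrib flip: sum_divide_distrib sum_distrib_left)
  also have "(\<Sum>v\<in>V. \<bar>a v\<bar>) + (\<Sum>v\<in>V. \<bar>b v\<bar>) \<le> 4 * total_weight V w"
  proof -
    have "(\<Sum>v\<in>V. \<bar>a v\<bar>) \<le> 2 * total_weight V w" "(\<Sum>v\<in>V. \<bar>b v\<bar>) \<le> 2 * total_weight V w"
      unfolding a_def b_def abs_minus_cancel
      by (rule sum_abs_multilinear_dicut_deriv_le; use nonneg xy in \<open>auto intro: order_trans\<close>)+
    then show ?thesis by linarith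
  qed
  finally show ?thesis using M unfolding a_def b_def by (simp add: divide_right_mono)
qed

lemma multilinear_dicut_mixed_step_le:
  fixes x y :: "nat \<Rightarrow> real"
  assumes nonneg: "\<And>u v. 0 \<le> w u v" and \<delta>: "0 \<le> \<delta>"
    and xy: "\<And>u. x u \<le> y u" and p01: "\<And>u. 0 \<le> p u \<and> p u \<le> 1"
  shows "multilinear_dicut V w (\<lambda>u. if u \<in> S then y u else x u)
       - multilinear_dicut V w (\<lambda>u. if u \<in> S then y u - \<delta> * (1 - p u) else x u + \<delta> * p u)
    \<le> \<delta> * (\<Sum>v\<in>V. if v \<in> S then (1 - p v) * multilinear_dicut_deriv V w x v
                   else p v * - multilinear_dicut_deriv V w y v)
      + \<delta> * \<delta> * total_weight V w"
proof -
  let ?D = "multilinear_dicut_deriv V w"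
  define z where "z u = (if u \<in> S then y u else x u)" for u
  define dz where "dz u = (if u \<in> S then - (\<delta> * (1 - p u)) else \<delta> * p u)" for u
  have "- (dz v * ?D z v) \<le> \<delta> * (if v \<in> S then (1 - p v) * ?D x v else p v * - ?D y v)" for v
  proof (cases "v \<in> S")
    case True
    have "?D z v \<le> ?D x v" by (rule multilinear_dicut_deriv_antimono[OF nonneg]) (use xy in \<open>auto simp: z_def\<close>)
    then show ?thesis using True p01[of v] \<delta> mult_left_mono[of "?D z v" "?D x v" "\<delta> * (1 - p v)"]
      by (simp add: dz_def mult_ac)
  next
    case False
    have "?D y v \<le> ?D z v" by (rule multilinear_dicut_deriv_antimono[OF nonneg]) (use xy in \<open>auto simp: z_def\<close>)
    then show ?thesis using False p01[of v] \<delta> mult_left_mono[of "?D y v" "?D z v" "\<delta> * p v"]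
      by (simp add: dz_def mult_ac)
  qed
  then have "- (\<Sum>v\<in>V. dz v * ?D z v) \<le> \<delta> * (\<Sum>v\<in>V. if v \<in> S then (1 - p v) * ?D x v else p v * - ?D y v)"
    by (simp add: sum_distrib_left flip: sum_negf) (rule sum_mono)
  moreover have "(\<lambda>u. if u \<in> S then y u - \<delta> * (1 - p u) else x u + \<delta> * p u) = (\<lambda>u. z u + dz u)"
    by (auto simp: z_def dz_def)
  moreover have "\<bar>dz u\<bar> \<le> \<delta>" for u
    using p01[of u] \<delta> by (auto simp: dz_def abs_mult intro: mult_left_le)
  ultimately show ?thesis
    using multilinear_dicut_add_ge[of w V dz \<delta> z] nonneg unfolding z_def by simp
qed

definition double_greedy_potential ::
    "nat set \<Rightarrow> (nat \<Rightarrow> nat \<Rightarrow> real) \<Rightarrow> nat set \<Rightarrow> (nat \<Rightarrow> real) \<Rightarrow> (nat \<Rightarrow> real) \<Rightarrow> real" where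
  "double_greedy_potential V w S x y = multilinear_dicut V w (\<lambda>u. if u \<in> S then y u else x u)
     + (multilinear_dicut V w x + multilinear_dicut V w y) / 2"

lemma double_greedy_step:
  fixes x y :: "nat \<Rightarrow> real"
  assumes nonneg: "\<And>u v. 0 \<le> w u v" and M: "0 < M" and \<delta>: "0 \<le> \<delta>"
    and xy: "\<And>u. 0 \<le> x u \<and> x u \<le> y u \<and> y u \<le> 1"
    and p: "\<And>u. p u = quantized_ratio M (multilinear_dicut_deriv V w x u) (- multilinear_dicut_deriv V w y u) / M"
  shows "double_greedy_potential V w S x y
       - double_greedy_potential V w S (\<lambda>u. x u + \<delta> * p u) (\<lambda>u. y u - \<delta> * (1 - p u))
     \<le> 2 * (\<delta> * \<delta> * total_weight V w) + 8 * (\<delta> * (total_weight V w / M))"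
proof -
  let ?F = "multilinear_dicut V w" and ?D = "multilinear_dicut_deriv V w" and ?W = "total_weight V w"
  let ?loss = "\<Sum>v\<in>V. if v \<in> S then (1 - p v) * ?D x v else p v * - ?D y v"
  let ?gain_x = "\<Sum>v\<in>V. p v * ?D x v" and ?gain_y = "\<Sum>v\<in>V. (1 - p v) * - ?D y v"
  have p01: "0 \<le> p u \<and> p u \<le> 1" for u
    using p[of u] quantized_ratio_le[of M] M by (simp add: divide_le_eq)
  have "\<bar>\<delta> * p u\<bar> \<le> \<delta>" "\<bar>- (\<delta> * (1 - p u))\<bar> \<le> \<delta>" for u
    using p01[of u] \<delta> by (auto simp: abs_mult intro: mult_left_le)
  then have "\<delta> * ?gain_x \<le> ?F (\<lambda>u. x u + \<delta> * p u) - ?F x + \<delta> * \<delta> * ?W"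
    and "\<delta> * ?gain_y \<le> ?F (\<lambda>u. y u - \<delta> * (1 - p u)) - ?F y + \<delta> * \<delta> * ?W"
    using multilinear_dicut_add_ge[of w V "\<lambda>u. \<delta> * p u" \<delta> x]
      multilinear_dicut_add_ge[of w V "\<lambda>u. - (\<delta> * (1 - p u))" \<delta> y] nonneg
    by (simp_all add: sum_distrib_left sum_negf mult_ac)
  moreover have "?loss \<le> (?gain_x + ?gain_y) / 2 + 8 * (?W / M)"
    by (rule sum_quantized_greedy_loss_le[OF nonneg M xy p])
  then have "\<delta> * ?loss \<le> \<delta> * ((?gain_x + ?gain_y) / 2 + 8 * (?W / M))"
    using \<delta> by (rule mult_left_mono)
  then have "\<delta> * ?loss \<le> (\<delta> * ?gain_x + \<delta> * ?gain_y) / 2 + 8 * (\<delta> * (?W / M))"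
    by (simp add: algebra_simps)
  moreover have "?F (\<lambda>u. if u \<in> S then y u else x u)
      - ?F (\<lambda>u. if u \<in> S then y u - \<delta> * (1 - p u) else x u + \<delta> * p u) \<le> \<delta> * ?loss + \<delta> * \<delta> * ?W"
    by (rule multilinear_dicut_mixed_step_le[OF nonneg \<delta> _ p01]) (use xy in auto)
  ultimately show ?thesis unfolding double_greedy_potential_def by argo
qed

lemma double_greedy_guarantee:
  fixes x :: "nat \<Rightarrow> nat \<Rightarrow> real"
  assumes nonneg: "\<And>u v. 0 \<le> w u v" and T: "0 < T" and M: "0 < M"
    and x_0: "\<And>u. x 0 u = 0"
    and x_Suc: "\<And>t u. x (Suc t) u = x t u +
      quantized_ratio M (multilinear_dicut_deriv V w (x t) u)
        (- multilinear_dicut_deriv V w (\<lambda>u. x t u + (1 - t / T)) u) / (T * M)"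
  shows "multilinear_dicut V w (\<lambda>u. of_bool (u \<in> S)) - 2 * multilinear_dicut V w (x T)
    \<le> 2 * (total_weight V w / T) + 8 * (total_weight V w / M)"
proof -
  let ?F = "multilinear_dicut V w" and ?W = "total_weight V w"
  define \<delta> where "\<delta> = 1 / T"
  define y where "y t u = x t u + (1 - t / T)" for t u
  define p where "p t u = quantized_ratio M (multilinear_dicut_deriv V w (x t) u)
      (- multilinear_dicut_deriv V w (y t) u) / M" for t u
  define \<Phi> where "\<Phi> t = double_greedy_potential V w S (x t) (y t)" for t
  have "0 \<le> \<delta>" by (simp add: \<delta>_def)
  have p01: "0 \<le> p t u \<and> p t u \<le> 1" for t u
    using quantized_ratio_le[of M] M unfolding p_def by (simp add: divide_le_eq)
  have x_Suc': "x (Suc t) = (\<lambda>u. x t u + \<delta> * p t u)" for t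
    using x_Suc unfolding p_def \<delta>_def y_def by (simp add: fun_eq_iff field_simps)
  have y_Suc: "y (Suc t) = (\<lambda>u. y t u - \<delta> * (1 - p t u))" for t
    unfolding y_def x_Suc' by (simp add: fun_eq_iff \<delta>_def add_divide_distrib algebra_simps)
  have x_range: "0 \<le> x t u \<and> x t u \<le> t / T" for t u
  proof (induction t)
    case (Suc t)
    have "0 \<le> \<delta> * p t u" "\<delta> * p t u \<le> \<delta>" using p01[of t u] \<open>0 \<le> \<delta>\<close> by (auto intro: mult_left_le)
    moreover have "real (Suc t) / T = t / T + \<delta>" by (simp add: \<delta>_def add_divide_distrib)
    ultimately show ?case using Suc by (simp add: x_Suc')
  qed (simp add: x_0)
  have "\<Phi> t - \<Phi> (Suc t) \<le> 2 * (\<delta> * \<delta> * ?W) + 8 * (\<delta> * (?W / M))" if "t < T" for t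
  proof -
    have "0 \<le> x t u \<and> x t u \<le> y t u \<and> y t u \<le> 1" for u
      using x_range[of t u] that T by (simp add: y_def divide_le_eq)
    from double_greedy_step[where w=w and V=V and S=S, OF nonneg M \<open>0 \<le> \<delta>\<close> this p_def]
    show ?thesis by (simp add: \<Phi>_def x_Suc' y_Suc)
  qed
  then have "\<Phi> 0 - \<Phi> T \<le> T * (2 * (\<delta> * \<delta> * ?W) + 8 * (\<delta> * (?W / M)))"
    using sum_bounded_above[of "{..<T}" "\<lambda>t. \<Phi> t - \<Phi> (Suc t)"] by (simp add: sum_lessThan_telescope')
  moreover have "x 0 = (\<lambda>_. 0)" "y 0 = (\<lambda>_. 1)" "y T = x T"
    using T by (simp_all add: fun_eq_iff y_def x_0)
  then have "\<Phi> 0 = ?F (\<lambda>u. of_bool (u \<in> S))" "\<Phi> T = 2 * ?F (x T)"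
    by (simp_all add: \<Phi>_def double_greedy_potential_def multilinear_dicut_def of_bool_def)
  moreover have "T * (2 * (\<delta> * \<delta> * ?W) + 8 * (\<delta> * (?W / M))) = 2 * (?W / T) + 8 * (?W / M)"
    using T by (simp add: \<delta>_def field_simps)
  ultimately show ?thesis by linarith
qed

section \<open>The CONGEST algorithm\<close>

definition local_nbrs :: "(nat \<Rightarrow> real) \<Rightarrow> (nat \<Rightarrow> real) \<Rightarrow> nat set" where
  "local_nbrs out_w in_w = {u. 0 < out_w u \<or> 0 < in_w u}"

definition local_deriv :: "(nat \<Rightarrow> real) \<Rightarrow> (nat \<Rightarrow> real) \<Rightarrow> (nat \<Rightarrow> real) \<Rightarrow> real" where
  "local_deriv out_w in_w X = (\<Sum>u\<in>local_nbrs out_w in_w. out_w u * (1 - X u) - in_w u * X u)"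

definition increment :: "nat \<Rightarrow> nat \<Rightarrow> (nat \<Rightarrow> real) \<Rightarrow> (nat \<Rightarrow> real) \<Rightarrow> (nat \<Rightarrow> real) \<Rightarrow> nat \<Rightarrow> nat" where
  "increment T M out_w in_w X t =
     quantized_ratio M (local_deriv out_w in_w X) (- local_deriv out_w in_w (\<lambda>u. X u + (1 - t / T)))"

primrec position :: "nat \<Rightarrow> nat \<Rightarrow> (nat \<Rightarrow> nat \<Rightarrow> real) \<Rightarrow> nat \<Rightarrow> nat \<Rightarrow> real" where
  "position T M w 0 = (\<lambda>u. 0)"
| "position T M w (Suc t) =
     (\<lambda>u. position T M w t u + increment T M (w u) (\<lambda>v. w v u) (position T M w t) t / (T * M))"

definition round_increment :: "nat \<Rightarrow> nat \<Rightarrow> (nat \<Rightarrow> nat \<Rightarrow> real) \<Rightarrow> nat \<Rightarrow> nat \<Rightarrow> nat" where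
  "round_increment T M w t u = increment T M (w u) (\<lambda>v. w v u) (position T M w t) t"

definition position_of_history :: "nat \<Rightarrow> nat \<Rightarrow> (nat \<Rightarrow> bool list) list \<Rightarrow> nat \<Rightarrow> nat \<Rightarrow> real" where
  "position_of_history T M h t u = (\<Sum>s<t. length ((h ! s) u)) / (T * M)"

definition local_increment :: "nat \<Rightarrow> nat \<Rightarrow> local_input \<Rightarrow> (nat \<Rightarrow> bool list) list \<Rightarrow> nat \<Rightarrow> nat" where
  "local_increment T M li h t =
     (case li of (_, _, out_w, in_w, _) \<Rightarrow> increment T M out_w in_w (position_of_history T M h t) t)"

text \<open>In round t every node sends its increment k \<le> M in unary (k copies of True), from which
  its neighbours track its position. At the end a node joins A iff its m random bits, read as a
  binary number, lie below the sum of its increments, i.e. below T M times its final position.\<close>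
definition dicut_alg :: "nat \<Rightarrow> nat \<Rightarrow> nat \<Rightarrow> congest_alg" where
  "dicut_alg T M m = \<lparr> rounds = T, rand_bits = (\<lambda>_. m),
     send = (\<lambda>(li, h) u. replicate (local_increment T M li h (length h)) True),
     decide = (\<lambda>(li, h). horner_sum of_bool 2 (snd (snd (snd (snd li)))) < (\<Sum>t<T. local_increment T M li h t)) \<rparr>"

lemma local_nbrs_eq_nbrs:
  assumes "wdigraph V w"
  shows "local_nbrs (w u) (\<lambda>v. w v u) = nbrs V w u"
proof -
  have "v \<in> V" if "0 < w u v \<or> 0 < w v u" for v
    using that assms unfolding wdigraph_def by (metis less_irrefl)
  then show ?thesis unfolding local_nbrs_def nbrs_def by auto
qed

lemma local_deriv_eq:
  assumes wd: "wdigraph V w"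
  shows "local_deriv (w u) (\<lambda>v. w v u) X = multilinear_dicut_deriv V w X u"
  unfolding local_deriv_def multilinear_dicut_deriv_def
proof (rule sum.mono_neutral_left)
  show "finite V" using wd by (simp add: wdigraph_def)
  show "local_nbrs (w u) (\<lambda>v. w v u) \<subseteq> V"
    using local_nbrs_eq_nbrs[OF wd] by (auto simp: nbrs_def)
  have "0 \<le> w a b" for a b using wd by (simp add: wdigraph_def)
  then show "\<forall>v\<in>V - local_nbrs (w u) (\<lambda>v. w v u). w u v * (1 - X v) - w v u * X v = 0"
    by (auto simp: local_nbrs_def order.strict_iff_order)
qed

lemma increment_cong:
  assumes "\<And>v. v \<in> local_nbrs out_w in_w \<Longrightarrow> X v = Y v"
  shows "increment T M out_w in_w X t = increment T M out_w in_w Y t"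
proof -
  have "local_deriv out_w in_w (\<lambda>u. X u + g) = local_deriv out_w in_w (\<lambda>u. Y u + g)" for g
    unfolding local_deriv_def using assms by (intro sum.cong) auto
  from this[of 0] this[of "1 - t / T"] show ?thesis unfolding increment_def by simp
qed

lemma position_eq_sum: "position T M w t u = (\<Sum>s<t. round_increment T M w s u) / (T * M)"
  by (induction t) (simp_all add: round_increment_def add_divide_distrib)

lemma local_increment_eq_round_increment:
  assumes wd: "wdigraph V w"
    and h: "\<And>s v. s < t \<Longrightarrow> v \<in> nbrs V w u \<Longrightarrow> length ((h ! s) v) = round_increment T M w s v"
  shows "local_increment T M (local_input V w r u) h t = round_increment T M w t u"
proof -
  have "position_of_history T M h t v = position T M w t v" if "v \<in> local_nbrs (w u) (\<lambda>v. w v u)" for v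
    using that h by (simp add: position_of_history_def position_eq_sum local_nbrs_eq_nbrs[OF wd])
  then show ?thesis
    unfolding local_increment_def local_input_def round_increment_def
    by (simp only: prod.case) (rule increment_cong)
qed

lemma history_dicut_alg:
  assumes wd: "wdigraph V w"
  shows "length (history (dicut_alg T M m) V w r t v) = t \<and>
    (\<forall>s<t. \<forall>u. (history (dicut_alg T M m) V w r t v ! s) u =
       (if u \<in> nbrs V w v then replicate (round_increment T M w s u) True else []))"
proof (induction t arbitrary: v)
  case (Suc t)
  have inc: "local_increment T M (local_input V w r u) (history (dicut_alg T M m) V w r t u) t =
      round_increment T M w t u" for u
    by (rule local_increment_eq_round_increment[OF wd]) (use Suc.IH in auto)
  show ?case
  proof (intro conjI allI impI)
    show "length (history (dicut_alg T M m) V w r (Suc t) v) = Suc t" using Suc.IH[of v] by simp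
    fix s u assume "s < Suc t"
    then consider "s < t" | "s = t" by linarith
    then show "(history (dicut_alg T M m) V w r (Suc t) v ! s) u =
        (if u \<in> nbrs V w v then replicate (round_increment T M w s u) True else [])"
    proof cases
      case 1
      then show ?thesis using Suc.IH[of v] by (simp add: nth_append)
    next
      case 2
      then show ?thesis using Suc.IH[of v] Suc.IH[of u] inc[of u]
        by (simp add: nth_append dicut_alg_def)
    qed
  qed
qed simp

lemma output_cut_dicut_alg:
  assumes wd: "wdigraph V w"
  shows "output_cut (dicut_alg T M m) V w r =
    {v\<in>V. horner_sum of_bool 2 (r v) < (\<Sum>t<T. round_increment T M w t v)}"
proof -
  have "(\<Sum>t<T. local_increment T M (local_input V w r v) (history (dicut_alg T M m) V w r T v) t) =
      (\<Sum>t<T. round_increment T M w t v)" for v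
    by (intro sum.cong refl local_increment_eq_round_increment[OF wd]) (use history_dicut_alg[OF wd] in auto)
  then show ?thesis
    unfolding output_cut_def node_view_def by (simp add: dicut_alg_def local_input_def)
qed

definition expected_cut :: "congest_alg \<Rightarrow> nat set \<Rightarrow> (nat \<Rightarrow> nat \<Rightarrow> real) \<Rightarrow> real" where
  "expected_cut A V w =
     measure_pmf.expectation (random_bits_pmf A V) (\<lambda>r. dicut_weight V w (output_cut A V w r))"

lemma expected_cut_dicut_alg:
  assumes wd: "wdigraph V w" and TM: "T * M = 2 ^ m"
  shows "expected_cut (dicut_alg T M m) V w = multilinear_dicut V w (position T M w T)"
proof -
  have fin: "finite V" and loopless: "\<And>u. w u u = 0" using wd by (auto simp: wdigraph_def)
  define J where "J v = (\<Sum>t<T. round_increment T M w t v)" for v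
  have "J v \<le> 2 ^ m" for v
  proof -
    have "J v \<le> (\<Sum>t<T. M)" unfolding J_def round_increment_def increment_def
      by (intro sum_mono quantized_ratio_le)
    then show ?thesis using TM by simp
  qed
  then have "measure (pmf_of_set {bs. length bs = m}) {bs. horner_sum of_bool 2 bs < J v} =
      position T M w T v" for v
    using TM by (simp add: measure_horner_sum_less position_eq_sum J_def flip: of_nat_mult)
  moreover have "expected_cut (dicut_alg T M m) V w =
      measure_pmf.expectation (Pi_pmf V [] (\<lambda>_. pmf_of_set {bs. length bs = m}))
        (\<lambda>r. dicut_weight V w {v\<in>V. horner_sum of_bool 2 (r v) < J v})"
    unfolding expected_cut_def random_bits_pmf_def output_cut_dicut_alg[OF wd] J_def
    by (simp add: dicut_alg_def)
  ultimately show ?thesis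
    using expectation_dicut_Pi_pmf[where w=w, OF fin loopless, of "[]" "\<lambda>_. pmf_of_set {bs. length bs = m}"
        "\<lambda>v bs. horner_sum of_bool 2 bs < J v"]
    by simp
qed

lemma expected_cut_dicut_alg_ge:
  assumes wd: "wdigraph V w" and T: "0 < T" and M: "M = 4 * T" and TM: "T * M = 2 ^ m"
  shows "max_dicut V w / 2 - 8 * (max_dicut V w / T) \<le> expected_cut (dicut_alg T M m) V w"
proof -
  have fin: "finite V" and nonneg: "\<And>u v. 0 \<le> w u v" and loopless: "\<And>u. w u u = 0"
    using wd by (auto simp: wdigraph_def)
  obtain S where S: "S \<subseteq> V" "dicut_weight V w S = max_dicut V w"
    using max_dicut_attained[OF fin] by blast
  have "multilinear_dicut V w (\<lambda>u. of_bool (u \<in> S)) - 2 * multilinear_dicut V w (position T M w T)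
      \<le> 2 * (total_weight V w / T) + 8 * (total_weight V w / M)"
    by (rule double_greedy_guarantee[OF nonneg T])
      (use M T in \<open>simp_all add: increment_def local_deriv_eq[OF wd]\<close>)
  moreover have "8 * (total_weight V w / M) = 2 * (total_weight V w / T)" using M by simp
  moreover have "total_weight V w / T \<le> 4 * (max_dicut V w / T)"
    using total_weight_le_max_dicut[where w=w, OF fin loopless] T by (simp add: divide_right_mono)
  ultimately show ?thesis
    using multilinear_dicut_indicator[OF fin S(1)] S(2) expected_cut_dicut_alg[OF wd TM] by simp
qed

lemma respects_bandwidth_dicut_alg: "respects_bandwidth k (dicut_alg T M m) M"
  unfolding respects_bandwidth_def msg_bound_def
  by (auto simp: dicut_alg_def node_view_def local_increment_def increment_def
      intro: order_trans[OF quantized_ratio_le] split: prod.split)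

definition trivial_alg :: congest_alg where
  "trivial_alg = \<lparr> rounds = 0, rand_bits = (\<lambda>_. 0), send = (\<lambda>_ _. []), decide = (\<lambda>_. False) \<rparr>"

lemma expected_cut_trivial_alg: "expected_cut trivial_alg V w = 0"
  by (simp add: expected_cut_def output_cut_def trivial_alg_def dicut_weight_def)

lemma respects_bandwidth_trivial_alg: "respects_bandwidth k trivial_alg 0"
  by (simp add: respects_bandwidth_def trivial_alg_def)

lemma exists_power_of_two_between:
  fixes c :: real
  assumes "1 \<le> c"
  obtains a :: nat where "c \<le> 2 ^ a" "2 ^ a \<le> 2 * c"
proof -
  obtain n :: nat where "c < 2 ^ n" using real_arch_pow[of 2 c] by auto
  define a where "a = (LEAST a::nat. c \<le> 2 ^ a)"
  have above: "c \<le> 2 ^ a" unfolding a_def by (rule LeastI[of _ n]) (use \<open>c < 2 ^ n\<close> in simp)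
  have "2 ^ a \<le> 2 * c"
  proof (cases a)
    case (Suc b)
    then have "\<not> c \<le> 2 ^ b" using not_less_Least[of b "\<lambda>a. c \<le> (2::real) ^ a"] by (simp add: a_def)
    then show ?thesis using Suc by simp
  qed (use assms in simp)
  with above show ?thesis using that by blast
qed

lemma dicut_alg_approximation:
  assumes "0 < \<epsilon>" "\<epsilon> < 1/2"
  obtains T m where "real (rounds (dicut_alg T (4 * T) m)) \<le> 16 / \<epsilon>"
    and "\<And>V w. wdigraph V w \<Longrightarrow> (1/2 - \<epsilon>) * max_dicut V w \<le> expected_cut (dicut_alg T (4 * T) m) V w"
proof -
  obtain a where a: "8 / \<epsilon> \<le> 2 ^ a" "2 ^ a \<le> 2 * (8 / \<epsilon>)"
    using exists_power_of_two_between[of "8 / \<epsilon>"] assms by (auto simp: field_simps)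
  \<comment> \<open>T is a power of two so that the probabilities k/(T M) are realised exactly by m random bits\<close>
  have TM: "2 ^ a * (4 * 2 ^ a) = (2::nat) ^ (2 * a + 2)"
    by (simp add: mult_2 power_add)
  have "(1/2 - \<epsilon>) * max_dicut V w \<le> expected_cut (dicut_alg (2 ^ a) (4 * 2 ^ a) (2 * a + 2)) V w"
    if wd: "wdigraph V w" for V w
  proof -
    have "8 / 2 ^ a \<le> \<epsilon>"
      using a(1) assms(1) by (simp add: divide_le_eq mult.commute)
    then have "8 / 2 ^ a * max_dicut V w \<le> \<epsilon> * max_dicut V w"
      using wd max_dicut_nonneg by (intro mult_right_mono) (auto simp: wdigraph_def)
    then have "8 * (max_dicut V w / 2 ^ a) \<le> \<epsilon> * max_dicut V w" by simp
    moreover have "max_dicut V w / 2 - 8 * (max_dicut V w / 2 ^ a)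
        \<le> expected_cut (dicut_alg (2 ^ a) (4 * 2 ^ a) (2 * a + 2)) V w"
      using expected_cut_dicut_alg_ge[OF wd _ refl TM] by simp
    moreover have "(1/2 - \<epsilon>) * max_dicut V w = max_dicut V w / 2 - \<epsilon> * max_dicut V w"
      by (simp add: left_diff_distrib)
    ultimately show ?thesis by linarith
  qed
  moreover have "real (rounds (dicut_alg (2 ^ a) (4 * 2 ^ a) (2 * a + 2))) \<le> 16 / \<epsilon>"
    using a(2) by (simp add: dicut_alg_def)
  ultimately show ?thesis using that by blast
qed

theorem mainTheorem11:
  shows "\<exists>C::real. \<forall>\<epsilon>::real. \<epsilon> > 0 \<longrightarrow> (\<forall>k::nat. \<exists>(A::congest_alg) (c::nat).
     real (rounds A) \<le> C / \<epsilon> \<and> respects_bandwidth k A c \<and>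
     (\<forall>V w. admissible k V w \<longrightarrow>
        measure_pmf.expectation (random_bits_pmf A V) (\<lambda>r. dicut_weight V w (output_cut A V w r))
          \<ge> (1/2 - \<epsilon>) * max_dicut V w))"
proof (intro exI[of _ 16] allI impI)
  fix \<epsilon> :: real and k :: nat
  assume "0 < \<epsilon>"
  show "\<exists>A c. real (rounds A) \<le> 16 / \<epsilon> \<and> respects_bandwidth k A c \<and>
      (\<forall>V w. admissible k V w \<longrightarrow>
        measure_pmf.expectation (random_bits_pmf A V) (\<lambda>r. dicut_weight V w (output_cut A V w r))
          \<ge> (1/2 - \<epsilon>) * max_dicut V w)"
  proof (cases "\<epsilon> < 1/2")
    case True
    then obtain T m where "real (rounds (dicut_alg T (4 * T) m)) \<le> 16 / \<epsilon>"
      "\<And>V w. wdigraph V w \<Longrightarrow> (1/2 - \<epsilon>) * max_dicut V w \<le> expected_cut (dicut_alg T (4 * T) m) V w"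
      using dicut_alg_approximation[OF \<open>0 < \<epsilon>\<close>] by blast
    then show ?thesis
      using respects_bandwidth_dicut_alg unfolding expected_cut_def admissible_def by blast
  next
    case False
    \<comment> \<open>here the guarantee is vacuous, but 16/\<epsilon> may be less than one round\<close>
    then have "(1/2 - \<epsilon>) * max_dicut V w \<le> expected_cut trivial_alg V w" if "admissible k V w" for V w
      using that max_dicut_nonneg
      by (simp add: expected_cut_trivial_alg mult_nonpos_nonneg admissible_def wdigraph_def)
    moreover have "real (rounds trivial_alg) \<le> 16 / \<epsilon>"
      using \<open>0 < \<epsilon>\<close> by (simp add: trivial_alg_def)
    ultimately show ?thesis
      using respects_bandwidth_trivial_alg unfolding expected_cut_def by blast
  qed
qed

end
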